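(* Let $P,Q$ be closed wire calculus terms of sort $(k,l)$, $R$ a closed term of sort $(m,n)$, $S$ a closed term of sort $(l,l')$ and $T$ a closed term of sort $(k',k)$, and suppose $P\sim Q$. Then: (i) $P\mathrel{;}S\sim Q\mathrel{;}S$ and $T\mathrel{;}P\sim T\mathrel{;}Q$; (ii) $P\otimes R\sim Q\otimes R$ and $R\otimes P\sim R\otimes Q$; (iii) for prefix strings $u,v$ such that the prefix terms are well-sorted closed terms, $\frac{u}{v}.P\sim\frac{u}{v}.Q$; (iv) $P+R\sim Q+R$ and $R+P\sim R+Q$ (whenever these are well-sorted, i.e. $R$ has sort $(k,l)$).
   Context: Wire calculus. Fix a set $\Sigma$ of signals and a symbol $\iota\notin\Sigma$ ("no signal"); $L=\Sigma\cup\{\iota\}$. Prefix strings are words over the atoms: signal variables $x$, binders $\lambda x$, $\iota$, and constants $\sigma\in\Sigma$. Terms: $P::= Y \mid P\mathrel{;}P\mid P\otimes P\mid \frac{u}{v}.P\mid P+P\mid \mu Y{:}\tau.P$, with $Y$ process variables, $u,v$ prefix strings, $\tau$ a sort $(k,l)$, $k,l\ge0$. In $\frac{u}{v}.P$ the variables $x$ with $\lambda x$ occurring in $uv$ are bound in $P$ (the set $bd$); other variables occurring in $uv$ are free ($fr$). Sorting (context $\Gamma$ of sorted process variables and signal variables): $Y$ has its declared sort; if $P:(k,n)$, $R:(n,l)$ then $P\mathrel{;}R:(k,l)$; if $P:(k,l)$, $Q:(m,n)$ then $P\otimes Q:(k+m,l+n)$; if $P:\tau$ under $\Gamma,Y{:}\tau'$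 then $\mu Y{:}\tau'.P:\tau$; if $|u|=k$, $|v|=l$, $fr\cap bd=\varnothing$, $fr\subseteq\Gamma$ and $P:(k,l)$ under $\Gamma\cup bd$, then $\frac{u}{v}.P:(k,l)$; if $P,Q:\tau$ then $P+Q:\tau$. Only closed terms (sorted in the empty context) are considered; terms are taken up to renaming of bound variables, with no other structural congruence. $\otimes$ binds tighter than $;$. Semantics: transitions $P\xrightarrow[\vec b]{\vec a}Q$ with $\vec a,\vec b\in L^*$ (upper label $\vec a$ of length $k$, lower $\vec b$ of length $l$ for $P:(k,l)$), $\vec\iota$ denoting words of $\iota$'s, generated by the rules: (Refl) $P\xrightarrow[\vec\iota]{\vec\iota}P$; ($\iota$L) from $P\xrightarrow[\vec\iota]{\vec\iota}R$ and $R\xrightarrow[\vec b]{\vec a}Q$ infer $P\xrightarrow[\vec b]{\vec a}Q$; ($\iota$R) from $P\xrightarrow[\vec b]{\vec a}R$ and $R\xrightarrow[\vec\iota]{\vec\iota}Q$ infer $P\xrightarrow[\vec b]{\vec a}Q$; (Cut) from $P\xrightarrow[\vec c]{\vec a}Q$, $R\xrightarrow[\vec b]{\vec c}S$ infer $P\mathrel{;}R\xrightarrow[\vec b]{\vec a}Q\mathrel{;}S$; (Ten) from $P\xrightarrow[\vec b]{\vec a}Q$, $R\xrightarrow[\vec d]{\vec c}S$ infer $P\otimes R\xrightarrow[\vec b\vec d]{\vec a\vec c}Q\otimes S$; (Pref) for every map $\sigma:bd\to L$, $\frac{u}{v}.P\xrightarrow[v|_\sigma]{u|_\sigma}P|_\sigma$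 where $u|_\sigma$ replaces each $\lambda x$ by $\sigma(x)$ and $P|_\sigma$ substitutes $\sigma(x)$ for $x$; (Rec) from $P[\mu Y.P/Y]\xrightarrow[\vec b]{\vec a}Q$ infer $\mu Y.P\xrightarrow[\vec b]{\vec a}Q$; ($+\iota$) from $P\xrightarrow[\vec\iota]{\vec\iota}Q$, $R\xrightarrow[\vec\iota]{\vec\iota}S$ infer $P+R\xrightarrow[\vec\iota]{\vec\iota}Q+S$; ($+$L) from $P\xrightarrow[\vec b]{\vec a}Q$ with $\vec a\vec b$ not consisting only of $\iota$'s infer $P+R\xrightarrow[\vec b]{\vec a}Q$, and symmetrically ($+$R). Bisimilarity: for closed terms $P,Q$ of the same sort, $P\sim Q$ iff there is a relation $S$ on terms containing $(P,Q)$ such that whenever $(P',Q')\in S$ and $P'\xrightarrow[\vec b]{\vec a}P''$ there is $Q''$ with $Q'\xrightarrow[\vec b]{\vec a}Q''$ and $(P'',Q'')\in S$, and symmetrically with the roles of the two sides exchanged. *)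

theory Defs
  imports Main
begin

datatype 's lab = Iota | Sig 's

text \<open>Atoms of prefix strings: signal variables x, binders (lambda x), iota, constants.\<close>
datatype ('s, 'v) atom = AVar 'v | ALam 'v | AIota | AConst 's

type_synonym sort = "nat \<times> nat"

text \<open>Terms; 'v = signal variables, 'y = process variables.\<close>
datatype ('s, 'v, 'y) tm =
    PVar 'y
  | Seq "('s, 'v, 'y) tm" "('s, 'v, 'y) tm"
  | Ten "('s, 'v, 'y) tm" "('s, 'v, 'y) tm"
  | Pre "('s, 'v) atom list" "('s, 'v) atom list" "('s, 'v, 'y) tm"
  | Sum "('s, 'v, 'y) tm" "('s, 'v, 'y) tm"
  | Mu 'y sort "('s, 'v, 'y) tm"

definition bd :: "('s, 'v) atom list \<Rightarrow> ('s, 'v) atom list \<Rightarrow> 'v set" where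
  "bd u v = {x. ALam x \<in> set (u @ v)}"

definition fr :: "('s, 'v) atom list \<Rightarrow> ('s, 'v) atom list \<Rightarrow> 'v set" where
  "fr u v = {x. AVar x \<in> set (u @ v)} - bd u v"

inductive sorted_tm :: "('y \<Rightarrow> sort option) \<Rightarrow> 'v set \<Rightarrow> ('s, 'v, 'y) tm \<Rightarrow> sort \<Rightarrow> bool" where
  s_var: "G Y = Some \<tau> \<Longrightarrow> sorted_tm G V (PVar Y) \<tau>"
| s_seq: "sorted_tm G V P (k, n) \<Longrightarrow> sorted_tm G V R (n, l) \<Longrightarrow> sorted_tm G V (Seq P R) (k, l)"
| s_ten: "sorted_tm G V P (k, l) \<Longrightarrow> sorted_tm G V Q (m, n) \<Longrightarrow>
          sorted_tm G V (Ten P Q) (k + m, l + n)"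
| s_mu: "sorted_tm (G(Y \<mapsto> \<tau>')) V P \<tau> \<Longrightarrow> sorted_tm G V (Mu Y \<tau>' P) \<tau>"
| s_pre: "length u = k \<Longrightarrow> length v = l \<Longrightarrow> fr u v \<inter> bd u v = {} \<Longrightarrow> fr u v \<subseteq> V \<Longrightarrow>
          sorted_tm G (V \<union> bd u v) P (k, l) \<Longrightarrow> sorted_tm G V (Pre u v P) (k, l)"
| s_sum: "sorted_tm G V P \<tau> \<Longrightarrow> sorted_tm G V Q \<tau> \<Longrightarrow> sorted_tm G V (Sum P Q) \<tau>"

definition closed_sorted :: "('s, 'v, 'y) tm \<Rightarrow> sort \<Rightarrow> bool" where
  "closed_sorted P \<tau> = sorted_tm Map.empty {} P \<tau>"

fun atom_lab :: "('v \<Rightarrow> 's lab) \<Rightarrow> ('s, 'v) atom \<Rightarrow> 's lab" where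
  "atom_lab \<sigma> (ALam x) = \<sigma> x"
| "atom_lab \<sigma> (AVar x) = \<sigma> x"
| "atom_lab \<sigma> AIota = Iota"
| "atom_lab \<sigma> (AConst c) = Sig c"

fun lab_atom :: "'s lab \<Rightarrow> ('s, 'v) atom" where
  "lab_atom Iota = AIota"
| "lab_atom (Sig c) = AConst c"

fun atom_subst :: "('v \<Rightarrow> 's lab) \<Rightarrow> 'v set \<Rightarrow> ('s, 'v) atom \<Rightarrow> ('s, 'v) atom" where
  "atom_subst \<sigma> D (AVar x) = (if x \<in> D then lab_atom (\<sigma> x) else AVar x)"
| "atom_subst \<sigma> D a = a"

fun sig_subst :: "('v \<Rightarrow> 's lab) \<Rightarrow> 'v set \<Rightarrow> ('s, 'v, 'y) tm \<Rightarrow> ('s, 'v, 'y) tm" where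
  "sig_subst \<sigma> D (PVar Y) = PVar Y"
| "sig_subst \<sigma> D (Seq P R) = Seq (sig_subst \<sigma> D P) (sig_subst \<sigma> D R)"
| "sig_subst \<sigma> D (Ten P R) = Ten (sig_subst \<sigma> D P) (sig_subst \<sigma> D R)"
| "sig_subst \<sigma> D (Sum P R) = Sum (sig_subst \<sigma> D P) (sig_subst \<sigma> D R)"
| "sig_subst \<sigma> D (Mu Y \<tau> P) = Mu Y \<tau> (sig_subst \<sigma> D P)"
| "sig_subst \<sigma> D (Pre u v P) =
     (let D' = D - bd u v in
      Pre (map (atom_subst \<sigma> D') u) (map (atom_subst \<sigma> D') v) (sig_subst \<sigma> D' P))"

text \<open>Process substitution P[N/Y] (only used with N closed, so no capture can occur).\<close>
fun proc_subst :: "('s, 'v, 'y) tm \<Rightarrow> 'y \<Rightarrow> ('s, 'v, 'y) tm \<Rightarrow> ('s, 'v, 'y) tm" where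
  "proc_subst (PVar Y') Y N = (if Y' = Y then N else PVar Y')"
| "proc_subst (Seq P R) Y N = Seq (proc_subst P Y N) (proc_subst R Y N)"
| "proc_subst (Ten P R) Y N = Ten (proc_subst P Y N) (proc_subst R Y N)"
| "proc_subst (Sum P R) Y N = Sum (proc_subst P Y N) (proc_subst R Y N)"
| "proc_subst (Pre u v P) Y N = Pre u v (proc_subst P Y N)"
| "proc_subst (Mu Y' \<tau> P) Y N = (if Y' = Y then Mu Y' \<tau> P else Mu Y' \<tau> (proc_subst P Y N))"

definition iotas :: "'s lab list \<Rightarrow> bool" where
  "iotas w = (\<forall>a \<in> set w. a = Iota)"

text \<open>trans P a b Q: P goes to Q with upper label a and lower label b.\<close>
inductive trans :: "('s, 'v, 'y) tm \<Rightarrow> 's lab list \<Rightarrow> 's lab list \<Rightarrow> ('s, 'v, 'y) tm \<Rightarrow> bool" where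
  Refl: "closed_sorted P (k, l) \<Longrightarrow> trans P (replicate k Iota) (replicate l Iota) P"
| IotaL: "trans P a b R \<Longrightarrow> iotas a \<Longrightarrow> iotas b \<Longrightarrow> trans R a' b' Q \<Longrightarrow> trans P a' b' Q"
| IotaR: "trans P a b R \<Longrightarrow> trans R a' b' Q \<Longrightarrow> iotas a' \<Longrightarrow> iotas b' \<Longrightarrow> trans P a b Q"
| Cut: "trans P a c Q \<Longrightarrow> trans R c b S \<Longrightarrow> trans (Seq P R) a b (Seq Q S)"
| TenR: "trans P a b Q \<Longrightarrow> trans R c d S \<Longrightarrow> trans (Ten P R) (a @ c) (b @ d) (Ten Q S)"
| Pref: "trans (Pre u v P) (map (atom_lab \<sigma>) u) (map (atom_lab \<sigma>) v) (sig_subst \<sigma> (bd u v) P)"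
| Rec: "trans (proc_subst P Y (Mu Y \<tau> P)) a b Q \<Longrightarrow> trans (Mu Y \<tau> P) a b Q"
| SumIota: "trans P a b Q \<Longrightarrow> trans R a b S \<Longrightarrow> iotas a \<Longrightarrow> iotas b \<Longrightarrow> trans (Sum P R) a b (Sum Q S)"
| SumL: "trans P a b Q \<Longrightarrow> \<not> iotas (a @ b) \<Longrightarrow> trans (Sum P R) a b Q"
| SumR: "trans R a b Q \<Longrightarrow> \<not> iotas (a @ b) \<Longrightarrow> trans (Sum P R) a b Q"

definition bisimulation :: "(('s, 'v, 'y) tm \<times> ('s, 'v, 'y) tm) set \<Rightarrow> bool" where
  "bisimulation S = (\<forall>(P', Q') \<in> S.
      (\<forall>a b P''. trans P' a b P'' \<longrightarrow> (\<exists>Q''. trans Q' a b Q'' \<and> (P'', Q'') \<in> S)) \<and>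
      (\<forall>a b Q''. trans Q' a b Q'' \<longrightarrow> (\<exists>P''. trans P' a b P'' \<and> (P'', Q'') \<in> S)))"

definition bisim :: "('s, 'v, 'y) tm \<Rightarrow> ('s, 'v, 'y) tm \<Rightarrow> bool" (infix "\<approx>" 50) where
  "P \<approx> Q = ((\<exists>\<tau>. closed_sorted P \<tau> \<and> closed_sorted Q \<tau>) \<and>
              (\<exists>S. (P, Q) \<in> S \<and> bisimulation S))"

end

theory Submission
  imports Defs
begin

text \<open>
  For a bisimulation B and each context C[-] below, {(C[P], C[Q]) | (P, Q) \<in> B} \<union> B \<union> Id is again a
  bisimulation, by rule induction on the transitions of C[P]: the step of the hole is answered by Q through
  B while the other components move unchanged. Because the rules for \<open>\<iota>\<close>-steps compose transitions,
  intermediate states may already have left the context relation for B \<union> Id: a non-silent step of a sum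
  discards a summand, and a prefix step strips the prefix. The substitution performed by the latter is void
  on closed terms, which is why the prefix context is restricted to them.
\<close>

type_synonym ('s, 'v, 'y) tm_rel = "(('s, 'v, 'y) tm \<times> ('s, 'v, 'y) tm) set"

lemma sig_subst_disjoint_id:
  "sorted_tm G V P \<tau> \<Longrightarrow> D \<inter> V = {} \<Longrightarrow> sig_subst \<sigma> D P = P"
proof (induction arbitrary: D rule: sorted_tm.induct)
  case (s_pre u k v l V G P)
  have "atom_subst \<sigma> (D - bd u v) a = a" if "a \<in> set (u @ v)" for a
    by (cases a) (use that s_pre.hyps(4) s_pre.prems in \<open>auto simp: fr_def bd_def\<close>)
  moreover have "sig_subst \<sigma> (D - bd u v) P = P"
    using s_pre.IH s_pre.prems by blast
  ultimately show ?case by (simp add: Let_def map_idI)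
qed auto

lemma sig_subst_closed: "closed_sorted P \<tau> \<Longrightarrow> sig_subst \<sigma> D P = P"
  unfolding closed_sorted_def using sig_subst_disjoint_id by blast

lemma closed_sorted_Pre: "closed_sorted (Pre u v P) \<tau> \<Longrightarrow> \<tau> = (length u, length v)"
  unfolding closed_sorted_def by (auto elim: sorted_tm.cases)

lemma iotas_replicate [simp]: "iotas (replicate k Iota)"
  by (simp add: iotas_def)

definition simulation :: "('s, 'v, 'y) tm_rel \<Rightarrow> bool" where
  "simulation R \<longleftrightarrow>
     (\<forall>(X, X') \<in> R. \<forall>a b Y. trans X a b Y \<longrightarrow> (\<exists>Y'. trans X' a b Y' \<and> (Y, Y') \<in> R))"

lemma simulationD:
  "simulation R \<Longrightarrow> (X, X') \<in> R \<Longrightarrow> trans X a b Y \<Longrightarrow> \<exists>Y'. trans X' a b Y' \<and> (Y, Y') \<in> R"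
  unfolding simulation_def by blast

lemma bisimulation_iff_simulation: "bisimulation R \<longleftrightarrow> simulation R \<and> simulation (R\<inverse>)"
  unfolding bisimulation_def simulation_def by fast

lemma simulation_reflcl: "simulation R \<Longrightarrow> simulation (R\<^sup>=)"
  unfolding simulation_def by blast

definition step_matched ::
    "('s, 'v, 'y) tm_rel \<Rightarrow> ('s, 'v, 'y) tm_rel \<Rightarrow> ('s, 'v, 'y) tm \<Rightarrow> 's lab list \<Rightarrow> 's lab list
     \<Rightarrow> ('s, 'v, 'y) tm \<Rightarrow> bool" where
  "step_matched A C X a b Y \<longleftrightarrow> (\<forall>X'. (X, X') \<in> A \<longrightarrow> (\<exists>Y'. trans X' a b Y' \<and> (Y, Y') \<in> A \<union> C))"

lemma simulation_if_steps_matched: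
  assumes "simulation C" and "\<And>X a b Y. trans X a b Y \<Longrightarrow> step_matched A C X a b Y"
  shows "simulation (A \<union> C)"
  using assms unfolding simulation_def step_matched_def by fast

lemma step_matched_no_partner: "(\<And>X'. (X, X') \<notin> A) \<Longrightarrow> step_matched A C X a b Y"
  unfolding step_matched_def by blast

lemma step_matched_chain:
  assumes C: "simulation C" and PM: "step_matched A C P a b M" and MQ: "step_matched A C M a' b' Q"
    and "trans M a' b' Q" and "(P, X') \<in> A"
  obtains M' Q' where "trans X' a b M'" "trans M' a' b' Q'" "(Q, Q') \<in> A \<union> C"
proof -
  obtain M' where M': "trans X' a b M'" "(M, M') \<in> A \<union> C"
    using PM \<open>(P, X') \<in> A\<close> unfolding step_matched_def by blast
  then consider "(M, M') \<in> A" | "(M, M') \<in> C" by blast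
  then obtain Q' where "trans M' a' b' Q'" "(Q, Q') \<in> A \<union> C"
  proof cases
    case 1
    then show ?thesis using MQ that unfolding step_matched_def by blast
  next
    case 2
    then show ?thesis using simulationD[OF C _ \<open>trans M a' b' Q\<close>] that by blast
  qed
  with M' that show ?thesis by blast
qed

lemma step_matched_IotaL:
  assumes "simulation C" "step_matched A C P a b M" "iotas a" "iotas b"
    and "trans M a' b' Q" "step_matched A C M a' b' Q"
  shows "step_matched A C P a' b' Q"
  unfolding step_matched_def
proof (intro allI impI)
  fix X' assume "(P, X') \<in> A"
  with assms obtain M' Q' where "trans X' a b M'" "trans M' a' b' Q'" "(Q, Q') \<in> A \<union> C"
    by (blast elim: step_matched_chain)
  with assms(3,4) show "\<exists>Q'. trans X' a' b' Q' \<and> (Q, Q') \<in> A \<union> C"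
    by (blast intro: trans.IotaL)
qed

lemma step_matched_IotaR:
  assumes "simulation C" "step_matched A C P a b M"
    and "trans M a' b' Q" "step_matched A C M a' b' Q" "iotas a'" "iotas b'"
  shows "step_matched A C P a b Q"
  unfolding step_matched_def
proof (intro allI impI)
  fix X' assume "(P, X') \<in> A"
  with assms obtain M' Q' where "trans X' a b M'" "trans M' a' b' Q'" "(Q, Q') \<in> A \<union> C"
    by (blast elim: step_matched_chain)
  with assms(5,6) show "\<exists>Q'. trans X' a b Q' \<and> (Q, Q') \<in> A \<union> C"
    by (blast intro: trans.IotaR)
qed

definition ctx_rel ::
    "('c \<Rightarrow> ('s, 'v, 'y) tm \<Rightarrow> ('s, 'v, 'y) tm) \<Rightarrow> ('s, 'v, 'y) tm_rel \<Rightarrow> ('s, 'v, 'y) tm_rel" where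
  "ctx_rel f B = {(f c P, f c Q) | c P Q. (P, Q) \<in> B}"

lemma converse_ctx_rel: "(ctx_rel f B)\<inverse> = ctx_rel f (B\<inverse>)"
  unfolding ctx_rel_def by blast

lemma converse_ctx_rel_restrict:
  "(ctx_rel f (B \<inter> K \<times> K) \<inter> K \<times> K)\<inverse> = ctx_rel f (B\<inverse> \<inter> K \<times> K) \<inter> K \<times> K"
  unfolding ctx_rel_def by blast

lemma step_matched_Seq_left:
  assumes B: "simulation B" and "trans X a b Y"
  shows "step_matched (ctx_rel (\<lambda>S P. Seq P S) B) (B\<^sup>=) X a b Y"
proof -
  let ?A = "ctx_rel (\<lambda>S P. Seq P S) B"
  from assms(2) show ?thesis
  proof (induction rule: trans.induct)
    case (Refl X k l)
    show ?case unfolding step_matched_def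
    proof (intro allI impI)
      fix X' assume "(X, X') \<in> ?A"
      then obtain P Q S where e: "X = Seq P S" "X' = Seq Q S" "(P, Q) \<in> B"
        by (auto simp: ctx_rel_def)
      with Refl obtain n where "closed_sorted P (k, n)" "closed_sorted S (n, l)"
        by (auto simp: closed_sorted_def elim: sorted_tm.cases)
      moreover from this(1) obtain Q' where
        "trans Q (replicate k Iota) (replicate n Iota) Q'" "(P, Q') \<in> B"
        using simulationD[OF B e(3) trans.Refl] by blast
      ultimately show "\<exists>Y'. trans X' (replicate k Iota) (replicate l Iota) Y' \<and> (X, Y') \<in> ?A \<union> B\<^sup>="
        using e trans.Cut trans.Refl by (fastforce simp: ctx_rel_def)
    qed
  next
    case (Cut P a c P' S b S')
    show ?case unfolding step_matched_def
    proof (intro allI impI)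
      fix X' assume "(Seq P S, X') \<in> ?A"
      then obtain Q where e: "X' = Seq Q S" "(P, Q) \<in> B" by (auto simp: ctx_rel_def)
      then obtain Q' where "trans Q a c Q'" "(P', Q') \<in> B"
        using simulationD[OF B] Cut.hyps(1) by blast
      then show "\<exists>Y'. trans X' a b Y' \<and> (Seq P' S', Y') \<in> ?A \<union> B\<^sup>="
        using e trans.Cut[OF _ Cut.hyps(2)] by (fastforce simp: ctx_rel_def)
    qed
  next
    case IotaL
    then show ?case by (blast intro: step_matched_IotaL simulation_reflcl B)
  next
    case IotaR
    then show ?case by (blast intro: step_matched_IotaR simulation_reflcl B)
  qed (auto intro!: step_matched_no_partner simp: ctx_rel_def)
qed

lemma step_matched_Seq_right:
  assumes B: "simulation B" and "trans X a b Y"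
  shows "step_matched (ctx_rel Seq B) (B\<^sup>=) X a b Y"
proof -
  let ?A = "ctx_rel Seq B"
  from assms(2) show ?thesis
  proof (induction rule: trans.induct)
    case (Refl X k l)
    show ?case unfolding step_matched_def
    proof (intro allI impI)
      fix X' assume "(X, X') \<in> ?A"
      then obtain T P Q where e: "X = Seq T P" "X' = Seq T Q" "(P, Q) \<in> B"
        by (auto simp: ctx_rel_def)
      with Refl obtain n where "closed_sorted T (k, n)" "closed_sorted P (n, l)"
        by (auto simp: closed_sorted_def elim: sorted_tm.cases)
      moreover from this(2) obtain Q' where
        "trans Q (replicate n Iota) (replicate l Iota) Q'" "(P, Q') \<in> B"
        using simulationD[OF B e(3) trans.Refl] by blast
      ultimately show "\<exists>Y'. trans X' (replicate k Iota) (replicate l Iota) Y' \<and> (X, Y') \<in> ?A \<union> B\<^sup>="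
        using e trans.Cut trans.Refl by (fastforce simp: ctx_rel_def)
    qed
  next
    case (Cut T a c T' P b P')
    show ?case unfolding step_matched_def
    proof (intro allI impI)
      fix X' assume "(Seq T P, X') \<in> ?A"
      then obtain Q where e: "X' = Seq T Q" "(P, Q) \<in> B" by (auto simp: ctx_rel_def)
      then obtain Q' where "trans Q c b Q'" "(P', Q') \<in> B"
        using simulationD[OF B] Cut.hyps(2) by blast
      then show "\<exists>Y'. trans X' a b Y' \<and> (Seq T' P', Y') \<in> ?A \<union> B\<^sup>="
        using e trans.Cut[OF Cut.hyps(1)] by (fastforce simp: ctx_rel_def)
    qed
  next
    case IotaL
    then show ?case by (blast intro: step_matched_IotaL simulation_reflcl B)
  next
    case IotaR
    then show ?case by (blast intro: step_matched_IotaR simulation_reflcl B)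
  qed (auto intro!: step_matched_no_partner simp: ctx_rel_def)
qed

lemma step_matched_Ten_left:
  assumes B: "simulation B" and "trans X a b Y"
  shows "step_matched (ctx_rel (\<lambda>R P. Ten P R) B) (B\<^sup>=) X a b Y"
proof -
  let ?A = "ctx_rel (\<lambda>R P. Ten P R) B"
  from assms(2) show ?thesis
  proof (induction rule: trans.induct)
    case (Refl X k l)
    show ?case unfolding step_matched_def
    proof (intro allI impI)
      fix X' assume "(X, X') \<in> ?A"
      then obtain P Q R where e: "X = Ten P R" "X' = Ten Q R" "(P, Q) \<in> B"
        by (auto simp: ctx_rel_def)
      with Refl obtain k1 l1 k2 l2 where
        sorts: "closed_sorted P (k1, l1)" "closed_sorted R (k2, l2)" "k = k1 + k2" "l = l1 + l2"
        by (auto simp: closed_sorted_def elim: sorted_tm.cases)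
      from sorts(1) obtain Q' where
        "trans Q (replicate k1 Iota) (replicate l1 Iota) Q'" "(P, Q') \<in> B"
        using simulationD[OF B e(3) trans.Refl] by blast
      with sorts show "\<exists>Y'. trans X' (replicate k Iota) (replicate l Iota) Y' \<and> (X, Y') \<in> ?A \<union> B\<^sup>="
        using e trans.TenR trans.Refl by (fastforce simp: ctx_rel_def replicate_add)
    qed
  next
    case (TenR P a b P' R c d R')
    show ?case unfolding step_matched_def
    proof (intro allI impI)
      fix X' assume "(Ten P R, X') \<in> ?A"
      then obtain Q where e: "X' = Ten Q R" "(P, Q) \<in> B" by (auto simp: ctx_rel_def)
      then obtain Q' where "trans Q a b Q'" "(P', Q') \<in> B"
        using simulationD[OF B] TenR.hyps(1) by blast
      then show "\<exists>Y'. trans X' (a @ c) (b @ d) Y' \<and> (Ten P' R', Y') \<in> ?A \<union> B\<^sup>="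
        using e trans.TenR[OF _ TenR.hyps(2)] by (fastforce simp: ctx_rel_def)
    qed
  next
    case IotaL
    then show ?case by (blast intro: step_matched_IotaL simulation_reflcl B)
  next
    case IotaR
    then show ?case by (blast intro: step_matched_IotaR simulation_reflcl B)
  qed (auto intro!: step_matched_no_partner simp: ctx_rel_def)
qed

lemma step_matched_Ten_right:
  assumes B: "simulation B" and "trans X a b Y"
  shows "step_matched (ctx_rel Ten B) (B\<^sup>=) X a b Y"
proof -
  let ?A = "ctx_rel Ten B"
  from assms(2) show ?thesis
  proof (induction rule: trans.induct)
    case (Refl X k l)
    show ?case unfolding step_matched_def
    proof (intro allI impI)
      fix X' assume "(X, X') \<in> ?A"
      then obtain R P Q where e: "X = Ten R P" "X' = Ten R Q" "(P, Q) \<in> B"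
        by (auto simp: ctx_rel_def)
      with Refl obtain k1 l1 k2 l2 where
        sorts: "closed_sorted R (k1, l1)" "closed_sorted P (k2, l2)" "k = k1 + k2" "l = l1 + l2"
        by (auto simp: closed_sorted_def elim: sorted_tm.cases)
      from sorts(2) obtain Q' where
        "trans Q (replicate k2 Iota) (replicate l2 Iota) Q'" "(P, Q') \<in> B"
        using simulationD[OF B e(3) trans.Refl] by blast
      with sorts show "\<exists>Y'. trans X' (replicate k Iota) (replicate l Iota) Y' \<and> (X, Y') \<in> ?A \<union> B\<^sup>="
        using e trans.TenR trans.Refl by (fastforce simp: ctx_rel_def replicate_add)
    qed
  next
    case (TenR R a b R' P c d P')
    show ?case unfolding step_matched_def
    proof (intro allI impI)
      fix X' assume "(Ten R P, X') \<in> ?A"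
      then obtain Q where e: "X' = Ten R Q" "(P, Q) \<in> B" by (auto simp: ctx_rel_def)
      then obtain Q' where "trans Q c d Q'" "(P', Q') \<in> B"
        using simulationD[OF B] TenR.hyps(2) by blast
      then show "\<exists>Y'. trans X' (a @ c) (b @ d) Y' \<and> (Ten R' P', Y') \<in> ?A \<union> B\<^sup>="
        using e trans.TenR[OF TenR.hyps(1)] by (fastforce simp: ctx_rel_def)
    qed
  next
    case IotaL
    then show ?case by (blast intro: step_matched_IotaL simulation_reflcl B)
  next
    case IotaR
    then show ?case by (blast intro: step_matched_IotaR simulation_reflcl B)
  qed (auto intro!: step_matched_no_partner simp: ctx_rel_def)
qed

lemma step_matched_Sum_left:
  assumes B: "simulation B" and "trans X a b Y"
  shows "step_matched (ctx_rel (\<lambda>R P. Sum P R) B) (B\<^sup>=) X a b Y"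
proof -
  let ?A = "ctx_rel (\<lambda>R P. Sum P R) B"
  from assms(2) show ?thesis
  proof (induction rule: trans.induct)
    case (Refl X k l)
    show ?case unfolding step_matched_def
    proof (intro allI impI)
      fix X' assume "(X, X') \<in> ?A"
      then obtain P Q R where e: "X = Sum P R" "X' = Sum Q R" "(P, Q) \<in> B"
        by (auto simp: ctx_rel_def)
      with Refl have "closed_sorted P (k, l)" "closed_sorted R (k, l)"
        by (auto simp: closed_sorted_def elim: sorted_tm.cases)
      moreover from this(1) obtain Q' where
        "trans Q (replicate k Iota) (replicate l Iota) Q'" "(P, Q') \<in> B"
        using simulationD[OF B e(3) trans.Refl] by blast
      ultimately show "\<exists>Y'. trans X' (replicate k Iota) (replicate l Iota) Y' \<and> (X, Y') \<in> ?A \<union> B\<^sup>="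
        using e trans.SumIota trans.Refl by (fastforce simp: ctx_rel_def)
    qed
  next
    case (SumIota P a b P' R R')
    show ?case unfolding step_matched_def
    proof (intro allI impI)
      fix X' assume "(Sum P R, X') \<in> ?A"
      then obtain Q where e: "X' = Sum Q R" "(P, Q) \<in> B" by (auto simp: ctx_rel_def)
      then obtain Q' where "trans Q a b Q'" "(P', Q') \<in> B"
        using simulationD[OF B] SumIota.hyps(1) by blast
      then show "\<exists>Y'. trans X' a b Y' \<and> (Sum P' R', Y') \<in> ?A \<union> B\<^sup>="
        using e trans.SumIota[OF _ SumIota.hyps(2-4)] by (fastforce simp: ctx_rel_def)
    qed
  next
    case (SumL P a b P' R)
    show ?case unfolding step_matched_def
    proof (intro allI impI)
      fix X' assume "(Sum P R, X') \<in> ?A"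
      then obtain Q where e: "X' = Sum Q R" "(P, Q) \<in> B" by (auto simp: ctx_rel_def)
      then obtain Q' where "trans Q a b Q'" "(P', Q') \<in> B"
        using simulationD[OF B] SumL.hyps(1) by blast
      then show "\<exists>Y'. trans X' a b Y' \<and> (P', Y') \<in> ?A \<union> B\<^sup>="
        using e trans.SumL SumL.hyps(2) by blast
    qed
  next
    case (SumR R a b R' P)
    show ?case unfolding step_matched_def
    proof (intro allI impI)
      fix X' assume "(Sum P R, X') \<in> ?A"
      then obtain Q where "X' = Sum Q R" by (auto simp: ctx_rel_def)
      then show "\<exists>Y'. trans X' a b Y' \<and> (R', Y') \<in> ?A \<union> B\<^sup>="
        using trans.SumR SumR.hyps by blast
    qed
  next
    case IotaL
    then show ?case by (blast intro: step_matched_IotaL simulation_reflcl B)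
  next
    case IotaR
    then show ?case by (blast intro: step_matched_IotaR simulation_reflcl B)
  qed (auto intro!: step_matched_no_partner simp: ctx_rel_def)
qed

lemma step_matched_Sum_right:
  assumes B: "simulation B" and "trans X a b Y"
  shows "step_matched (ctx_rel Sum B) (B\<^sup>=) X a b Y"
proof -
  let ?A = "ctx_rel Sum B"
  from assms(2) show ?thesis
  proof (induction rule: trans.induct)
    case (Refl X k l)
    show ?case unfolding step_matched_def
    proof (intro allI impI)
      fix X' assume "(X, X') \<in> ?A"
      then obtain R P Q where e: "X = Sum R P" "X' = Sum R Q" "(P, Q) \<in> B"
        by (auto simp: ctx_rel_def)
      with Refl have "closed_sorted R (k, l)" "closed_sorted P (k, l)"
        by (auto simp: closed_sorted_def elim: sorted_tm.cases)
      moreover from this(2) obtain Q' where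
        "trans Q (replicate k Iota) (replicate l Iota) Q'" "(P, Q') \<in> B"
        using simulationD[OF B e(3) trans.Refl] by blast
      ultimately show "\<exists>Y'. trans X' (replicate k Iota) (replicate l Iota) Y' \<and> (X, Y') \<in> ?A \<union> B\<^sup>="
        using e trans.SumIota trans.Refl by (fastforce simp: ctx_rel_def)
    qed
  next
    case (SumIota R a b R' P P')
    show ?case unfolding step_matched_def
    proof (intro allI impI)
      fix X' assume "(Sum R P, X') \<in> ?A"
      then obtain Q where e: "X' = Sum R Q" "(P, Q) \<in> B" by (auto simp: ctx_rel_def)
      then obtain Q' where "trans Q a b Q'" "(P', Q') \<in> B"
        using simulationD[OF B] SumIota.hyps(2) by blast
      then show "\<exists>Y'. trans X' a b Y' \<and> (Sum R' P', Y') \<in> ?A \<union> B\<^sup>="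
        using e trans.SumIota[OF SumIota.hyps(1) _ SumIota.hyps(3,4)] by (fastforce simp: ctx_rel_def)
    qed
  next
    case (SumL R a b R' P)
    show ?case unfolding step_matched_def
    proof (intro allI impI)
      fix X' assume "(Sum R P, X') \<in> ?A"
      then obtain Q where "X' = Sum R Q" by (auto simp: ctx_rel_def)
      then show "\<exists>Y'. trans X' a b Y' \<and> (R', Y') \<in> ?A \<union> B\<^sup>="
        using trans.SumL SumL.hyps by blast
    qed
  next
    case (SumR P a b P' R)
    show ?case unfolding step_matched_def
    proof (intro allI impI)
      fix X' assume "(Sum R P, X') \<in> ?A"
      then obtain Q where e: "X' = Sum R Q" "(P, Q) \<in> B" by (auto simp: ctx_rel_def)
      then obtain Q' where "trans Q a b Q'" "(P', Q') \<in> B"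
        using simulationD[OF B] SumR.hyps(1) by blast
      then show "\<exists>Y'. trans X' a b Y' \<and> (P', Y') \<in> ?A \<union> B\<^sup>="
        using e trans.SumR SumR.hyps(2) by blast
    qed
  next
    case IotaL
    then show ?case by (blast intro: step_matched_IotaL simulation_reflcl B)
  next
    case IotaR
    then show ?case by (blast intro: step_matched_IotaR simulation_reflcl B)
  qed (auto intro!: step_matched_no_partner simp: ctx_rel_def)
qed

definition closed_tm :: "('s, 'v, 'y) tm set" where
  "closed_tm = {P. \<exists>\<tau>. closed_sorted P \<tau>}"

lemma step_matched_Pre:
  assumes B: "simulation B" and "trans X a b Y"
  shows "step_matched (ctx_rel (\<lambda>(u, v). Pre u v) (B \<inter> closed_tm \<times> closed_tm) \<inter> closed_tm \<times> closed_tm)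
           (B\<^sup>=) X a b Y"
proof -
  let ?A = "ctx_rel (\<lambda>(u, v). Pre u v) (B \<inter> closed_tm \<times> closed_tm) \<inter> closed_tm \<times> closed_tm"
  from assms(2) show ?thesis
  proof (induction rule: trans.induct)
    case (Refl X k l)
    show ?case unfolding step_matched_def
    proof (intro allI impI)
      fix X' assume "(X, X') \<in> ?A"
      then obtain u v P Q where e: "X = Pre u v P" "X' = Pre u v Q" "X' \<in> closed_tm"
        by (auto simp: ctx_rel_def)
      then obtain \<tau> where "closed_sorted (Pre u v Q) \<tau>"
        by (auto simp: closed_tm_def)
      moreover have "(k, l) = (length u, length v)"
        using Refl e(1) by (blast dest: closed_sorted_Pre)
      ultimately have "closed_sorted X' (k, l)"
        using e(2) closed_sorted_Pre by blast
      with \<open>(X, X') \<in> ?A\<close> show "\<exists>Y'. trans X' (replicate k Iota) (replicate l Iota) Y' \<and> (X, Y') \<in> ?A \<union> B\<^sup>="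
        using trans.Refl by blast
    qed
  next
    case (Pref u v P \<sigma>)
    show ?case unfolding step_matched_def
    proof (intro allI impI)
      fix X' assume "(Pre u v P, X') \<in> ?A"
      then obtain Q where e: "X' = Pre u v Q" "(P, Q) \<in> B" "P \<in> closed_tm" "Q \<in> closed_tm"
        by (auto simp: ctx_rel_def)
      then have "sig_subst \<sigma> (bd u v) P = P" "sig_subst \<sigma> (bd u v) Q = Q"
        by (auto simp: closed_tm_def intro: sig_subst_closed)
      moreover have "trans X' (map (atom_lab \<sigma>) u) (map (atom_lab \<sigma>) v) (sig_subst \<sigma> (bd u v) Q)"
        unfolding e(1) by (rule trans.Pref)
      ultimately show "\<exists>Y'. trans X' (map (atom_lab \<sigma>) u) (map (atom_lab \<sigma>) v) Y'
                      \<and> (sig_subst \<sigma> (bd u v) P, Y') \<in> ?A \<union> B\<^sup>="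
        using e(2) by auto
    qed
  next
    case IotaL
    then show ?case by (blast intro: step_matched_IotaL simulation_reflcl B)
  next
    case IotaR
    then show ?case by (blast intro: step_matched_IotaR simulation_reflcl B)
  qed (auto intro!: step_matched_no_partner simp: ctx_rel_def)
qed

lemma bisim_if_related_in_context:
  fixes F :: "('s, 'v, 'y) tm_rel \<Rightarrow> ('s, 'v, 'y) tm_rel"
  assumes matched: "\<And>B X a b Y. simulation B \<Longrightarrow> trans X a b Y \<Longrightarrow> step_matched (F B) (B\<^sup>=) X a b Y"
    and F_converse: "\<And>B. (F B)\<inverse> = F (B\<inverse>)"
    and B: "bisimulation B" and "(X, Y) \<in> F B" "closed_sorted X \<tau>" "closed_sorted Y \<tau>"
  shows "X \<approx> Y"
proof -
  have sim: "simulation (F B' \<union> B'\<^sup>=)" if "simulation B'" for B'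
    using simulation_if_steps_matched[OF simulation_reflcl] matched that by blast
  have "(F B \<union> B\<^sup>=)\<inverse> = F (B\<inverse>) \<union> (B\<inverse>)\<^sup>="
    using F_converse by auto
  with B have "bisimulation (F B \<union> B\<^sup>=)"
    unfolding bisimulation_iff_simulation by (simp add: sim)
  with assms(4-6) show ?thesis
    unfolding bisim_def by blast
qed

theorem mainTheorem1:
  fixes P Q R S T :: "('s, 'v, 'y) tm"
  assumes "closed_sorted P (k, l)" and "closed_sorted Q (k, l)"
    and "closed_sorted R (m, n)" and "closed_sorted S (l, l')" and "closed_sorted T (k', k)"
    and "P \<approx> Q"
  shows "(Seq P S \<approx> Seq Q S \<and> Seq T P \<approx> Seq T Q)
       \<and> (Ten P R \<approx> Ten Q R \<and> Ten R P \<approx> Ten R Q)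
       \<and> (\<forall>u v. closed_sorted (Pre u v P) (k, l) \<longrightarrow> closed_sorted (Pre u v Q) (k, l)
                 \<longrightarrow> Pre u v P \<approx> Pre u v Q)
       \<and> ((m, n) = (k, l) \<longrightarrow> Sum P R \<approx> Sum Q R \<and> Sum R P \<approx> Sum R Q)"
proof -
  from \<open>P \<approx> Q\<close> obtain B where B: "bisimulation B" and PQ: "(P, Q) \<in> B"
    unfolding bisim_def by blast
  note in_context = bisim_if_related_in_context[OF _ _ B]
  note sorted = assms(1-5)[unfolded closed_sorted_def]
  have "Seq P S \<approx> Seq Q S" "Seq T P \<approx> Seq T Q" "Ten P R \<approx> Ten Q R" "Ten R P \<approx> Ten R Q"
    by (rule in_context[OF step_matched_Seq_left converse_ctx_rel]
          in_context[OF step_matched_Seq_right converse_ctx_rel]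
          in_context[OF step_matched_Ten_left converse_ctx_rel]
          in_context[OF step_matched_Ten_right converse_ctx_rel];
        use PQ sorted in \<open>auto simp: ctx_rel_def closed_sorted_def intro: sorted_tm.intros\<close>)+
  moreover have "Sum P R \<approx> Sum Q R" "Sum R P \<approx> Sum R Q" if "(m, n) = (k, l)"
    by (rule in_context[OF step_matched_Sum_left converse_ctx_rel]
          in_context[OF step_matched_Sum_right converse_ctx_rel];
        use PQ sorted that in \<open>auto simp: ctx_rel_def closed_sorted_def intro: sorted_tm.intros\<close>)+
  moreover have "Pre u v P \<approx> Pre u v Q"
    if "closed_sorted (Pre u v P) (k, l)" "closed_sorted (Pre u v Q) (k, l)" for u v
    by (rule in_context[OF step_matched_Pre converse_ctx_rel_restrict _ that])
      (use PQ assms(1,2) that in \<open>auto simp: ctx_rel_def closed_tm_def\<close>)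
  ultimately show ?thesis by blast
qed

end
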